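(* Let $A_1$ and $B_1$ be arrays with $n$ columns, and suppose that $A_1$ and $B_1$ are $\phi$-equivalent with respect to the completely filled $m\times n$ array $J_{m,n}$, where $\phi$ is the bishop's move function. Then $A_1$ and $B_1$ are $\phi$-equivalent with respect to every $m\times n$ array.
   Context: Arrays are partially filled and toroidal, every row and column containing a filled cell; $F(X)$ is the set of filled cells. $s_R(i,j)=(i,j+t)$, $s_C(i,j)=(i+t,j)$ with $t\ge1$ minimal such that the cell is filled; the bishop's move is $s_C\circ s_R$. For arrays $Y$ and $X$ with the same number of columns, $[Y\mid X]^T$ denotes the array obtained by placing $Y$ above $X$; cells of $X$ are identified with their copies in it. Given a move function $\phi$ on $[A_1\mid X]^T$ and $\sigma$ on $[B_1\mid X]^T$, let $\phi_2:F(X)\to F(X)$, $\phi_2(x)=\phi^t(x)$ with $t\ge1$ minimal such that $\phi^t(x)\in X$, and similarly $\sigma_2$. $A_1$ and $B_1$ are $(\phi,\sigma)$-equivalent with respect to $X$ if for every $x\in F(X)$: $\phi(x)\notin X\iff\sigma(x)\notin X$, and if $\phi(x),\sigma(x)\notin X$ then $\phi_2(x)=\sigma_2(x)$. When $\phi$ and $\sigma$ are both the bishop's move this is called $\phi$-equivalence. *)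

theory Defs
  imports Main
begin

type_synonym cell = "nat \<times> nat"

text \<open>A toroidal partially filled array with r rows and c columns, given by its
set of filled cells F (0-indexed); every row and every column contains a filled cell.\<close>
definition is_array :: "nat \<Rightarrow> nat \<Rightarrow> cell set \<Rightarrow> bool" where
  "is_array r c F \<longleftrightarrow> F \<subseteq> {..<r} \<times> {..<c}
     \<and> (\<forall>i<r. \<exists>j. (i, j) \<in> F) \<and> (\<forall>j<c. \<exists>i. (i, j) \<in> F)"

definition J :: "nat \<Rightarrow> nat \<Rightarrow> cell set" where
  "J m n = {..<m} \<times> {..<n}"

definition s_R :: "nat \<Rightarrow> cell set \<Rightarrow> cell \<Rightarrow> cell" where
  "s_R c F x = (let t = (LEAST t. t \<ge> 1 \<and> (fst x, (snd x + t) mod c) \<in> F)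
                in (fst x, (snd x + t) mod c))"

definition s_C :: "nat \<Rightarrow> cell set \<Rightarrow> cell \<Rightarrow> cell" where
  "s_C r F x = (let t = (LEAST t. t \<ge> 1 \<and> ((fst x + t) mod r, snd x) \<in> F)
                in ((fst x + t) mod r, snd x))"

definition bishop :: "nat \<Rightarrow> nat \<Rightarrow> cell set \<Rightarrow> cell \<Rightarrow> cell" where
  "bishop r c F = s_C r F \<circ> s_R c F"

text \<open>[Y | X]^T where Y has a rows: Y occupies rows 0..a-1, X is shifted down by a.\<close>
definition stack :: "nat \<Rightarrow> cell set \<Rightarrow> cell set \<Rightarrow> cell set" where
  "stack a Y X = Y \<union> (\<lambda>(i, j). (i + a, j)) ` X"

definition return_X :: "(cell \<Rightarrow> cell) \<Rightarrow> nat \<Rightarrow> cell \<Rightarrow> cell" where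
  "return_X f a x = (f ^^ (LEAST t. t \<ge> 1 \<and> fst ((f ^^ t) x) \<ge> a)) x"

text \<open>(phi,sigma)-equivalence of A_1 (a rows) and B_1 (b rows) w.r.t. X, where phi is a
move function on [A_1|X]^T and sigma on [B_1|X]^T. A cell (i,j) of X is the cell
(i+a,j) of the first stack and (i+b,j) of the second.\<close>
definition move_equiv ::
  "(cell \<Rightarrow> cell) \<Rightarrow> nat \<Rightarrow> (cell \<Rightarrow> cell) \<Rightarrow> nat \<Rightarrow> cell set \<Rightarrow> bool" where
  "move_equiv \<phi> a \<sigma> b X \<longleftrightarrow> (\<forall>i j. (i, j) \<in> X \<longrightarrow>
      ((fst (\<phi> (i + a, j)) < a \<longleftrightarrow> fst (\<sigma> (i + b, j)) < b)
      \<and> (fst (\<phi> (i + a, j)) < a \<and> fst (\<sigma> (i + b, j)) < b \<longrightarrow>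
          (fst (return_X \<phi> a (i + a, j)) - a, snd (return_X \<phi> a (i + a, j)))
        = (fst (return_X \<sigma> b (i + b, j)) - b, snd (return_X \<sigma> b (i + b, j))))))"

definition bishop_equiv ::
  "nat \<Rightarrow> cell set \<Rightarrow> nat \<Rightarrow> cell set \<Rightarrow> nat \<Rightarrow> nat \<Rightarrow> cell set \<Rightarrow> bool" where
  "bishop_equiv a A b B m n X \<longleftrightarrow>
     move_equiv (bishop (a + m) n (stack a A X)) a (bishop (b + m) n (stack b B X)) b X"

end

theory Submission
  imports Defs
begin

(* From a cell of X, the bishop of [A|X] moves along its row inside X and then down its column;
   it leaves X exactly when no filled cell of X lies below, which does not depend on A, and it
   then enters A at the topmost filled cell of A in that column.  From the cell of the last row
   of J just left of that column, the bishop of [A|J] makes the same entry into A.  Inside A both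
   bishops move alike; leaving A in column c, the one in [A|J] lands in row 0 of J and the one in
   [A|X] on the topmost filled cell of column c of X.  So the first return to X in [A|X] is
   determined by the column of the first return to J in [A|J], which the hypothesis makes the
   same for A and B.  The return happens because in [A|J] every move from A goes strictly down. *)

lemma is_array_memD: "is_array r c F \<Longrightarrow> (i, j) \<in> F \<Longrightarrow> i < r \<and> j < c"
  unfolding is_array_def by auto

lemma is_array_rows: "is_array r c F \<Longrightarrow> F \<subseteq> {..<r} \<times> UNIV"
  by (auto dest: is_array_memD)

lemma is_array_column: "is_array r c F \<Longrightarrow> j < c \<Longrightarrow> \<exists>i. (i, j) \<in> F"
  unfolding is_array_def by auto

lemma is_array_row: "is_array r c F \<Longrightarrow> i < r \<Longrightarrow> \<exists>j. (i, j) \<in> F"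
  unfolding is_array_def by auto

lemma J_array: "0 < m \<Longrightarrow> 0 < n \<Longrightarrow> is_array m n (J m n)"
  unfolding is_array_def J_def by auto

lemma return_X_reaches:
  assumes "\<exists>t\<ge>1. a \<le> fst ((f ^^ t) x)"
  shows "a \<le> fst (return_X f a x)"
  unfolding return_X_def using LeastI_ex[OF assms] by simp

lemma funpow_escapes:
  fixes \<mu> :: "'a \<Rightarrow> nat"
  assumes "\<And>y. \<mu> y < a \<Longrightarrow> \<mu> y < \<mu> (f y)"
  shows "\<exists>t. a \<le> \<mu> ((f ^^ t) x)"
proof (induction "a - \<mu> x" arbitrary: x rule: less_induct)
  case less
  show ?case
  proof (cases "a \<le> \<mu> x")
    case True
    then have "a \<le> \<mu> ((f ^^ 0) x)" by simp
    then show ?thesis ..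
  next
    case False
    with assms have "a - \<mu> (f x) < a - \<mu> x" by (simp add: diff_less_mono2)
    then obtain t where "a \<le> \<mu> ((f ^^ t) (f x))" using less by blast
    then have "a \<le> \<mu> ((f ^^ Suc t) x)" by (simp only: funpow_Suc_right comp_apply)
    then show ?thesis ..
  qed
qed

lemma return_X_transfer:
  assumes start: "f x = h x'" "fst (h x') < a"
    and agree: "\<And>y. fst y < a \<Longrightarrow> f y = g (h y)"
    and g_fix: "\<And>p. fst p < a \<Longrightarrow> g p = p"
    and g_stays: "\<And>p. a \<le> fst p \<Longrightarrow> a \<le> fst (g p)"
    and reach: "\<exists>t\<ge>1. a \<le> fst ((h ^^ t) x')"
  shows "return_X f a x = g (return_X h a x')"
proof -
  define T where "T = (LEAST t. t \<ge> 1 \<and> a \<le> fst ((h ^^ t) x'))"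
  have T: "1 \<le> T" "a \<le> fst ((h ^^ T) x')" using LeastI_ex[OF reach] unfolding T_def by auto
  have before_T: "fst ((h ^^ t) x') < a" if "1 \<le> t" "t < T" for t
    using not_less_Least[of t "\<lambda>t. t \<ge> 1 \<and> a \<le> fst ((h ^^ t) x')"] that
    unfolding T_def by auto
  have orbits_agree: "(f ^^ t) x = (h ^^ t) x'" if "1 \<le> t" "t < T" for t
    using that
  proof (induction t)
    case (Suc t)
    show ?case
    proof (cases "t = 0")
      case False
      with Suc have "(f ^^ t) x = (h ^^ t) x'" by simp
      moreover have "fst ((h ^^ t) x') < a" "fst ((h ^^ Suc t) x') < a"
        using before_T[of t] before_T[of "Suc t"] Suc.prems False by simp_all
      ultimately show ?thesis using agree g_fix by simp
    qed (use start in simp)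
  qed simp
  have "T \<noteq> 1" using T(2) start(2) by auto
  define t where "t = T - 1"
  have t: "T = Suc t" "1 \<le> t" using T(1) \<open>T \<noteq> 1\<close> unfolding t_def by auto
  have f_T: "(f ^^ T) x = g ((h ^^ T) x')"
    using orbits_agree[of t] before_T[of t] agree t by simp
  have "(LEAST t. t \<ge> 1 \<and> a \<le> fst ((f ^^ t) x)) = T"
  proof (rule Least_equality)
    show "1 \<le> T \<and> a \<le> fst ((f ^^ T) x)" using T f_T g_stays by simp
    fix s assume "1 \<le> s \<and> a \<le> fst ((f ^^ s) x)"
    then show "T \<le> s" using orbits_agree[of s] before_T[of s] by fastforce
  qed
  then show ?thesis unfolding return_X_def T_def[symmetric] using f_T by simp
qed

lemma s_C_eqI:
  assumes "1 \<le> t" "((i + t) mod R, j) \<in> F"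
    and "\<And>s. 1 \<le> s \<Longrightarrow> s < t \<Longrightarrow> ((i + s) mod R, j) \<notin> F"
  shows "s_C R F (i, j) = ((i + t) mod R, j)"
proof -
  have "(LEAST t. t \<ge> 1 \<and> ((i + t) mod R, j) \<in> F) = t"
    by (rule Least_equality) (use assms not_le in auto)
  then show ?thesis unfolding s_C_def Let_def by simp
qed

lemma s_C_eq_first_below:
  assumes "i < k" "k < R" "(k, j) \<in> F"
  shows "s_C R F (i, j) = (LEAST k. i < k \<and> (k, j) \<in> F, j)"
proof -
  define k0 where "k0 = (LEAST k. i < k \<and> (k, j) \<in> F)"
  have k0: "i < k0" "(k0, j) \<in> F"
    using LeastI[of "\<lambda>k. i < k \<and> (k, j) \<in> F" k] assms unfolding k0_def by auto
  have "k0 \<le> k" unfolding k0_def using assms by (simp add: Least_le)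
  with assms have "k0 < R" by simp
  have "s_C R F (i, j) = ((i + (k0 - i)) mod R, j)"
  proof (rule s_C_eqI)
    fix s assume "1 \<le> s" "s < k0 - i"
    then have "(i + s) mod R = i + s" "i < i + s" "i + s < k0" using \<open>k0 < R\<close> by auto
    then show "((i + s) mod R, j) \<notin> F"
      using not_less_Least[of "i + s" "\<lambda>k. i < k \<and> (k, j) \<in> F"] unfolding k0_def by auto
  qed (use k0 \<open>k0 < R\<close> in auto)
  with k0 \<open>k0 < R\<close> show ?thesis unfolding k0_def by simp
qed

lemma s_C_eq_first_wrapped:
  assumes "i < R" "(k, j) \<in> F" "\<forall>k. (k, j) \<in> F \<longrightarrow> k \<le> i"
  shows "s_C R F (i, j) = (LEAST k. (k, j) \<in> F, j)"
proof -
  define k0 where "k0 = (LEAST k. (k, j) \<in> F)"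
  have k0: "(k0, j) \<in> F" unfolding k0_def using assms(2) by (rule LeastI)
  with assms have "k0 \<le> i" by blast
  have wrap: "(i + (R - i + k0)) mod R = k0"
    using \<open>k0 \<le> i\<close> assms(1) by (simp add: le_mod_geq)
  have "s_C R F (i, j) = ((i + (R - i + k0)) mod R, j)"
  proof (rule s_C_eqI)
    fix s assume s: "1 \<le> s" "s < R - i + k0"
    show "((i + s) mod R, j) \<notin> F"
    proof (cases "i + s < R")
      case True
      then show ?thesis using assms(3) s by fastforce
    next
      case False
      have "i + s - R < k0" using False s assms(1) by linarith
      moreover from this have "(i + s) mod R = i + s - R"
        using False \<open>k0 \<le> i\<close> assms(1) by (simp add: le_mod_geq)
      ultimately show ?thesis
        using not_less_Least[of "i + s - R" "\<lambda>k. (k, j) \<in> F"] unfolding k0_def by simp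
    qed
  qed (use wrap k0 assms(1) in auto)
  with wrap show ?thesis unfolding k0_def by simp
qed

lemma fst_s_R [simp]: "fst (s_R c F x) = fst x"
  unfolding s_R_def Let_def by simp

lemma snd_s_R_less: "0 < c \<Longrightarrow> snd (s_R c F x) < c"
  unfolding s_R_def Let_def by simp

lemma s_R_eq_next:
  assumes "(i, (j + 1) mod c) \<in> F"
  shows "s_R c F (i, j) = (i, (j + 1) mod c)"
proof -
  have "(LEAST t. t \<ge> 1 \<and> (i, (j + t) mod c) \<in> F) = 1"
    by (rule Least_equality) (use assms in auto)
  then show ?thesis unfolding s_R_def Let_def by simp
qed

lemma mem_stack_iff:
  assumes "A \<subseteq> {..<a} \<times> UNIV"
  shows "(p, c) \<in> stack a A X \<longleftrightarrow> (p, c) \<in> A \<or> (a \<le> p \<and> (p - a, c) \<in> X)"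
  using assms unfolding stack_def by (force simp: image_iff)

lemma mem_stack_upper: "p < a \<Longrightarrow> (p, c) \<in> stack a A X \<longleftrightarrow> (p, c) \<in> A"
  unfolding stack_def by auto

lemma mem_stack_lower: "A \<subseteq> {..<a} \<times> UNIV \<Longrightarrow> (i + a, c) \<in> stack a A X \<longleftrightarrow> (i, c) \<in> X"
  by (auto simp: mem_stack_iff)

lemma s_R_stack_upper: "r < a \<Longrightarrow> s_R n (stack a A X) (r, j) = s_R n A (r, j)"
  unfolding s_R_def by (simp add: mem_stack_upper)

lemma s_R_stack_lower:
  "A \<subseteq> {..<a} \<times> UNIV \<Longrightarrow> s_R n (stack a A X) (i + a, j) = (i + a, snd (s_R n X (i, j)))"
  unfolding s_R_def by (simp add: mem_stack_lower Let_def)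

lemma Least_stack_column:
  assumes "A \<subseteq> {..<a} \<times> UNIV" "P k" "(k, c) \<in> A"
  shows "(LEAST k. P k \<and> (k, c) \<in> stack a A X) = (LEAST k. P k \<and> (k, c) \<in> A)"
proof (rule Least_equality)
  let ?k0 = "LEAST k. P k \<and> (k, c) \<in> A"
  have k0: "P ?k0 \<and> (?k0, c) \<in> A"
    using assms(2,3) by (intro LeastI[where P = "\<lambda>k. P k \<and> (k, c) \<in> A"]) simp
  then show "P ?k0 \<and> (?k0, c) \<in> stack a A X" unfolding stack_def by blast
  fix y assume y: "P y \<and> (y, c) \<in> stack a A X"
  show "?k0 \<le> y"
  proof (cases "(y, c) \<in> A")
    case True
    with y show ?thesis by (simp add: Least_le)
  next
    case False
    with y assms(1) have "a \<le> y" by (auto simp: mem_stack_iff)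
    moreover have "?k0 < a" using k0 assms(1) by auto
    ultimately show ?thesis by simp
  qed
qed

lemma bishop_stack_from_X_stays:
  assumes A: "is_array a n A" and X: "is_array m n X"
    and below: "(k, snd (s_R n X (i, j))) \<in> X" "i < k"
  shows "a \<le> fst (bishop (a + m) n (stack a A X) (i + a, j))"
proof -
  define c where "c = snd (s_R n X (i, j))"
  let ?S = "stack a A X"
  have A_rows: "A \<subseteq> {..<a} \<times> UNIV" using A by (rule is_array_rows)
  have k: "(k + a, c) \<in> ?S" using below(1) unfolding c_def mem_stack_lower[OF A_rows] .
  have "k < m" using is_array_memD[OF X below(1)] by simp
  have "bishop (a + m) n ?S (i + a, j) = s_C (a + m) ?S (i + a, c)"
    unfolding bishop_def c_def by (simp add: s_R_stack_lower[OF A_rows])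
  also have "\<dots> = (LEAST k. i + a < k \<and> (k, c) \<in> ?S, c)"
    by (rule s_C_eq_first_below[OF _ _ k]) (use below(2) \<open>k < m\<close> in simp_all)
  finally have "fst (bishop (a + m) n ?S (i + a, j)) = (LEAST k. i + a < k \<and> (k, c) \<in> ?S)"
    by simp
  moreover have "i + a < (LEAST k. i + a < k \<and> (k, c) \<in> ?S)"
    using LeastI[of "\<lambda>k. i + a < k \<and> (k, c) \<in> ?S", OF conjI[OF _ k]] below(2) by simp
  ultimately show ?thesis by simp
qed

lemma bishop_stack_from_X_exits:
  fixes X :: "cell set" and i j n :: nat
  defines "c \<equiv> snd (s_R n X (i, j))"
  assumes A: "is_array a n A" and X: "is_array m n X" and ij: "(i, j) \<in> X"
    and below: "\<forall>k. (k, c) \<in> X \<longrightarrow> k \<le> i"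
  shows "bishop (a + m) n (stack a A X) (i + a, j) = (LEAST k. (k, c) \<in> A, c)"
proof -
  have A_rows: "A \<subseteq> {..<a} \<times> UNIV" using A by (rule is_array_rows)
  have "i < m" "j < n" using is_array_memD[OF X ij] by auto
  then have "c < n" unfolding c_def by (simp add: snd_s_R_less)
  then obtain r where r: "(r, c) \<in> A" using is_array_column[OF A] by blast
  have "bishop (a + m) n (stack a A X) (i + a, j) = s_C (a + m) (stack a A X) (i + a, c)"
    unfolding bishop_def c_def by (simp add: s_R_stack_lower[OF A_rows])
  also have "\<dots> = (LEAST k. (k, c) \<in> stack a A X, c)"
  proof (rule s_C_eq_first_wrapped)
    show "(r, c) \<in> stack a A X" using r unfolding stack_def by blast
    show "\<forall>k. (k, c) \<in> stack a A X \<longrightarrow> k \<le> i + a"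
      using below A_rows by (auto simp: mem_stack_iff)
  qed (use \<open>i < m\<close> in simp)
  also have "\<dots> = (LEAST k. (k, c) \<in> A, c)"
    using Least_stack_column[OF A_rows, where P = "\<lambda>_. True"] r by simp
  finally show ?thesis .
qed

lemma bishop_stack_leaves_X_iff:
  assumes A: "is_array a n A" and X: "is_array m n X" and ij: "(i, j) \<in> X"
  shows "fst (bishop (a + m) n (stack a A X) (i + a, j)) < a
    \<longleftrightarrow> (\<forall>k. (k, snd (s_R n X (i, j))) \<in> X \<longrightarrow> k \<le> i)"
proof
  assume "fst (bishop (a + m) n (stack a A X) (i + a, j)) < a"
  then show "\<forall>k. (k, snd (s_R n X (i, j))) \<in> X \<longrightarrow> k \<le> i"
    using bishop_stack_from_X_stays[OF A X, of _ i j] by (meson leD not_le_imp_less)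
next
  define c where "c = snd (s_R n X (i, j))"
  assume "\<forall>k. (k, snd (s_R n X (i, j))) \<in> X \<longrightarrow> k \<le> i"
  then have "bishop (a + m) n (stack a A X) (i + a, j) = (LEAST k. (k, c) \<in> A, c)"
    unfolding c_def by (rule bishop_stack_from_X_exits[OF A X ij])
  moreover have "c < n" using is_array_memD[OF X ij] unfolding c_def by (simp add: snd_s_R_less)
  then obtain r where "(r, c) \<in> A" using is_array_column[OF A] by blast
  then have "(LEAST k. (k, c) \<in> A) < a"
    using is_array_memD[OF A LeastI[of "\<lambda>k. (k, c) \<in> A" r]] by simp
  ultimately show "fst (bishop (a + m) n (stack a A X) (i + a, j)) < a" by simp
qed

lemma bishop_stack_from_A:
  fixes A :: "cell set" and r j n :: nat
  defines "c \<equiv> snd (s_R n A (r, j))"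
  assumes A: "is_array a n A" and X: "is_array m n X" and "r < a"
  shows "bishop (a + m) n (stack a A X) (r, j) =
    (if \<exists>k. r < k \<and> (k, c) \<in> A then (LEAST k. r < k \<and> (k, c) \<in> A, c)
     else ((LEAST k. (k, c) \<in> X) + a, c))"
proof -
  let ?S = "stack a A X"
  have A_rows: "A \<subseteq> {..<a} \<times> UNIV" using A by (rule is_array_rows)
  obtain j' where "(r, j') \<in> A" using is_array_row[OF A \<open>r < a\<close>] by blast
  then have "0 < n" using is_array_memD[OF A] by fastforce
  then have "c < n" unfolding c_def by (rule snd_s_R_less)
  have "s_R n ?S (r, j) = (r, c)"
    unfolding c_def s_R_stack_upper[OF \<open>r < a\<close>] by (simp add: prod_eq_iff)
  then have bishop_eq: "bishop (a + m) n ?S (r, j) = s_C (a + m) ?S (r, c)"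
    unfolding bishop_def by simp
  show ?thesis
  proof (cases "\<exists>k. r < k \<and> (k, c) \<in> A")
    case True
    then obtain k where k: "r < k" "(k, c) \<in> A" by blast
    have "k < a" using is_array_memD[OF A k(2)] by simp
    have "s_C (a + m) ?S (r, c) = (LEAST k. r < k \<and> (k, c) \<in> ?S, c)"
      by (rule s_C_eq_first_below[of _ k]) (use k \<open>k < a\<close> in \<open>simp_all add: stack_def\<close>)
    also have "\<dots> = (LEAST k. r < k \<and> (k, c) \<in> A, c)"
      using Least_stack_column[OF A_rows, of "\<lambda>k. r < k"] k by simp
    finally show ?thesis using True bishop_eq by simp
  next
    case False
    obtain k where k: "(k, c) \<in> X" using is_array_column[OF X \<open>c < n\<close>] by blast
    define k0 where "k0 = (LEAST k. (k, c) \<in> X)"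
    have k0: "(k0, c) \<in> X" unfolding k0_def using k by (rule LeastI)
    then have "k0 < m" using is_array_memD[OF X] by simp
    have "s_C (a + m) ?S (r, c) = (LEAST k. r < k \<and> (k, c) \<in> ?S, c)"
      by (rule s_C_eq_first_below[of _ "k0 + a"])
        (use k0 \<open>k0 < m\<close> \<open>r < a\<close> in \<open>simp_all add: mem_stack_lower[OF A_rows]\<close>)
    also have "(LEAST k. r < k \<and> (k, c) \<in> ?S) = k0 + a"
    proof (rule Least_equality)
      show "r < k0 + a \<and> (k0 + a, c) \<in> ?S"
        using k0 \<open>r < a\<close> by (simp add: mem_stack_lower[OF A_rows])
      fix y assume y: "r < y \<and> (y, c) \<in> ?S"
      with False have "a \<le> y" "(y - a, c) \<in> X" by (auto simp: mem_stack_iff[OF A_rows])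
      then show "k0 + a \<le> y" unfolding k0_def using Least_le[of "\<lambda>k. (k, c) \<in> X"] by fastforce
    qed
    finally show ?thesis using False bishop_eq unfolding k0_def by auto
  qed
qed

lemma bishop_stack_from_A_rises:
  assumes A: "is_array a n A" and X: "is_array m n X" and "fst y < a"
  shows "fst y < fst (bishop (a + m) n (stack a A X) y)"
proof -
  obtain r j where y: "y = (r, j)" by fastforce
  define c where "c = snd (s_R n A (r, j))"
  have "r < (LEAST k. r < k \<and> (k, c) \<in> A)" if "\<exists>k. r < k \<and> (k, c) \<in> A"
    using LeastI_ex[OF that] by simp
  then show ?thesis
    using bishop_stack_from_A[OF A X, of r j] assms(3) unfolding y c_def[symmetric] by auto
qed

definition enter_X :: "nat \<Rightarrow> cell set \<Rightarrow> cell \<Rightarrow> cell" where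
  "enter_X a X p = (if fst p < a then p else ((LEAST k. (k, snd p) \<in> X) + a, snd p))"

lemma bishop_stack_from_A_via_J:
  assumes A: "is_array a n A" and X: "is_array m n X" and "fst y < a"
  shows "bishop (a + m) n (stack a A X) y = enter_X a X (bishop (a + m) n (stack a A (J m n)) y)"
proof -
  obtain r j where y: "y = (r, j)" by fastforce
  define c where "c = snd (s_R n A (r, j))"
  obtain j' where "(r, j') \<in> A" using is_array_row[OF A] assms(3) y by auto
  then have "0 < n" using is_array_memD[OF A] by fastforce
  then have "c < n" unfolding c_def by (rule snd_s_R_less)
  then obtain k where "(k, c) \<in> X" using is_array_column[OF X] by blast
  then have "0 < m" using is_array_memD[OF X] by fastforce
  have J: "is_array m n (J m n)" using J_array[OF \<open>0 < m\<close> \<open>0 < n\<close>] .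
  have J_top: "(LEAST k. (k, c) \<in> J m n) = 0" using \<open>0 < m\<close> \<open>c < n\<close> by (simp add: J_def)
  have "(LEAST k. r < k \<and> (k, c) \<in> A) < a" if "\<exists>k. r < k \<and> (k, c) \<in> A"
    using is_array_memD[OF A conjunct2[OF LeastI_ex[OF that]]] by simp
  then show ?thesis
    using bishop_stack_from_A[OF A X, of r j] bishop_stack_from_A[OF A J, of r j] assms(3)
    unfolding y c_def[symmetric] J_top by (auto simp: enter_X_def)
qed

lemma return_X_stack_via_J:
  fixes A X :: "cell set" and a m n i j :: nat
  defines "c \<equiv> snd (s_R n X (i, j))"
  defines "x' \<equiv> (m - 1 + a, (c + n - 1) mod n)"
  defines "\<phi> \<equiv> bishop (a + m) n (stack a A X)"
    and "\<phi>\<^sub>J \<equiv> bishop (a + m) n (stack a A (J m n))"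
  assumes A: "is_array a n A" and X: "is_array m n X" and ij: "(i, j) \<in> X"
    and exits: "\<forall>k. (k, c) \<in> X \<longrightarrow> k \<le> i"
  shows "fst (\<phi>\<^sub>J x') < a"
    and "(fst (return_X \<phi> a (i + a, j)) - a, snd (return_X \<phi> a (i + a, j)))
       = (LEAST k. (k, snd (return_X \<phi>\<^sub>J a x')) \<in> X, snd (return_X \<phi>\<^sub>J a x'))"
proof -
  have "i < m" "j < n" using is_array_memD[OF X ij] by auto
  then have "0 < m" "0 < n" by auto
  then have "c < n" unfolding c_def by (simp add: snd_s_R_less)
  have J: "is_array m n (J m n)" using J_array[OF \<open>0 < m\<close> \<open>0 < n\<close>] .
  define j' where "j' = (c + n - 1) mod n"
  have "(j' + 1) mod n = c"
  proof -
    have "(j' + 1) mod n = (c + n - 1 + 1) mod n" unfolding j'_def by (simp add: mod_Suc_eq)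
    also have "\<dots> = c" using \<open>0 < n\<close> \<open>c < n\<close> by simp
    finally show ?thesis .
  qed
  then have "s_R n (J m n) (m - 1, j') = (m - 1, c)"
    using s_R_eq_next[of "m - 1" j' n "J m n"] \<open>0 < m\<close> \<open>c < n\<close> by (simp add: J_def)
  then have c_J: "snd (s_R n (J m n) (m - 1, j')) = c" by simp
  have x'_J: "(m - 1, j') \<in> J m n" and exits_J: "\<forall>k. (k, c) \<in> J m n \<longrightarrow> k \<le> m - 1"
    using \<open>0 < m\<close> \<open>0 < n\<close> unfolding j'_def J_def by auto
  have x': "x' = (m - 1 + a, j')" unfolding x'_def j'_def ..
  show lt: "fst (\<phi>\<^sub>J x') < a"
    using bishop_stack_leaves_X_iff[OF A J x'_J] exits_J unfolding c_J \<phi>\<^sub>J_def x' by simp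
  have same_entry: "\<phi> (i + a, j) = \<phi>\<^sub>J x'"
    using bishop_stack_from_X_exits[OF A X ij] bishop_stack_from_X_exits[OF A J x'_J]
      exits exits_J unfolding c_J \<phi>_def \<phi>\<^sub>J_def x' c_def by simp
  obtain t where "a \<le> fst ((\<phi>\<^sub>J ^^ t) (\<phi>\<^sub>J x'))"
    using funpow_escapes[where \<mu> = fst and a = a and f = "\<phi>\<^sub>J"] bishop_stack_from_A_rises[OF A J]
    unfolding \<phi>\<^sub>J_def by blast
  then have reach: "\<exists>t\<ge>1. a \<le> fst ((\<phi>\<^sub>J ^^ t) x')"
    by (intro exI[of _ "Suc t"]) (simp only: funpow_Suc_right comp_apply, simp)
  have "return_X \<phi> a (i + a, j) = enter_X a X (return_X \<phi>\<^sub>J a x')"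
    using same_entry lt bishop_stack_from_A_via_J[OF A X] reach
    by (intro return_X_transfer) (simp_all add: \<phi>_def \<phi>\<^sub>J_def enter_X_def)
  with return_X_reaches[OF reach]
  show "(fst (return_X \<phi> a (i + a, j)) - a, snd (return_X \<phi> a (i + a, j)))
      = (LEAST k. (k, snd (return_X \<phi>\<^sub>J a x')) \<in> X, snd (return_X \<phi>\<^sub>J a x'))"
    by (simp add: enter_X_def)
qed

theorem proposition4p2:
  fixes A B :: "cell set" and a b m n :: nat
  assumes "is_array a n A" and "is_array b n B"
    and "bishop_equiv a A b B m n (J m n)"
  shows "\<forall>X. is_array m n X \<longrightarrow> bishop_equiv a A b B m n X"
proof (intro allI impI)
  fix X assume X: "is_array m n X"
  define \<phi> where "\<phi> = bishop (a + m) n (stack a A X)"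
  define \<sigma> where "\<sigma> = bishop (b + m) n (stack b B X)"
  have "move_equiv \<phi> a \<sigma> b X"
    unfolding move_equiv_def
  proof (intro allI impI conjI)
    fix i j assume ij: "(i, j) \<in> X"
    define c where "c = snd (s_R n X (i, j))"
    note leaves_A = bishop_stack_leaves_X_iff[OF assms(1) X ij, folded \<phi>_def c_def]
    note leaves_B = bishop_stack_leaves_X_iff[OF assms(2) X ij, folded \<sigma>_def c_def]
    show "(fst (\<phi> (i + a, j)) < a) = (fst (\<sigma> (i + b, j)) < b)"
      using leaves_A leaves_B by simp
    assume "fst (\<phi> (i + a, j)) < a \<and> fst (\<sigma> (i + b, j)) < b"
    then have exits: "\<forall>k. (k, c) \<in> X \<longrightarrow> k \<le> i" using leaves_A by simp
    note via_J_A = return_X_stack_via_J[OF assms(1) X ij, folded \<phi>_def c_def, OF exits]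
    note via_J_B = return_X_stack_via_J[OF assms(2) X ij, folded \<sigma>_def c_def, OF exits]
    have "(m - 1, (c + n - 1) mod n) \<in> J m n"
      using is_array_memD[OF X ij] by (simp add: J_def)
    with assms(3) via_J_A(1) via_J_B(1)
    have "snd (return_X (bishop (a + m) n (stack a A (J m n))) a (m - 1 + a, (c + n - 1) mod n))
        = snd (return_X (bishop (b + m) n (stack b B (J m n))) b (m - 1 + b, (c + n - 1) mod n))"
      unfolding bishop_equiv_def move_equiv_def by blast
    then show "(fst (return_X \<phi> a (i + a, j)) - a, snd (return_X \<phi> a (i + a, j)))
        = (fst (return_X \<sigma> b (i + b, j)) - b, snd (return_X \<sigma> b (i + b, j)))"
      unfolding via_J_A(2) via_J_B(2) by simp
  qed
  then show "bishop_equiv a A b B m n X"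
    unfolding bishop_equiv_def \<phi>_def \<sigma>_def .
qed

end
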